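(* Let $k\ge1$ and let $A_k$ be the matrix defined below. The Graver basis $\mathcal{G}(A_k)$ is the disjoint union of the set $$\pm\left\{(-\mathbf{v}_1,\,-\mathbf{1}_k+\mathbf{v}_1,\,\mathbf{v}_2,\,\mathbf{1}_k-\mathbf{v}_2,\,-1,\,1)^{\mathsf T}:\mathbf{v}_1,\mathbf{v}_2\in\{0,1\}^k\right\}$$ and the sets $$\pm\left\{(\mathbf{e}_i,-\mathbf{e}_i,\mathbf{0}_k,\mathbf{0}_k,0,0)^{\mathsf T}:i\in[k]\right\},\qquad \pm\left\{(\mathbf{0}_k,\mathbf{0}_k,\mathbf{e}_i,-\mathbf{e}_i,0,0)^{\mathsf T}:i\in[k]\right\},$$ where $\mathbf{e}_1,\dots,\mathbf{e}_k$ are the standard unit vectors of $\mathbb{Z}^k$ and $\pm S:=S\cup(-S)$.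
   Context: $I_k$ is the $k\times k$ identity, $\mathbf{1}_k$ the all-ones vector and $\mathbf{0}_k$ the zero vector in $\mathbb{Z}^k$. Define $$A_k=\begin{pmatrix} I_k & I_k & 0 & 0 & -\mathbf{1}_k & \mathbf{0}\\ 0&0&I_k&I_k&\mathbf{0}&-\mathbf{1}_k\\ 0&0&0&0&1&1\end{pmatrix}\in\mathbb{Z}^{(2k+1)\times(4k+2)}$$ (zero blocks of appropriate sizes; last two columns are single columns). For vectors $\mathbf{u},\mathbf{v}\in\mathbb{Z}^n$, $\mathbf{u}\sqsubseteq\mathbf{v}$ iff $u_iv_i\ge0$ and $|u_i|\le|v_i|$ for all $i$. The Graver basis $\mathcal{G}(A)$ of $A\in\mathbb{Z}^{d\times n}$ is the set of $\sqsubseteq$-minimal elements of $(\ker(A)\cap\mathbb{Z}^n)\setminus\{\mathbf{0}\}$. *)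

theory Defs
  imports Main
begin

text \<open>Integer vectors in Z^n are represented as functions nat => int that vanish
  outside {0..<n}; a d x n integer matrix as a function nat => nat => int
  (row index, column index), only entries with row < d and column < n matter.\<close>

definition zvecs :: "nat \<Rightarrow> (nat \<Rightarrow> int) set" where
  "zvecs n = {u. \<forall>i\<ge>n. u i = 0}"

definition conformal_le :: "nat \<Rightarrow> (nat \<Rightarrow> int) \<Rightarrow> (nat \<Rightarrow> int) \<Rightarrow> bool" where
  "conformal_le n u v \<longleftrightarrow> (\<forall>i<n. u i * v i \<ge> 0 \<and> \<bar>u i\<bar> \<le> \<bar>v i\<bar>)"

definition int_kernel :: "nat \<Rightarrow> nat \<Rightarrow> (nat \<Rightarrow> nat \<Rightarrow> int) \<Rightarrow> (nat \<Rightarrow> int) set" where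
  "int_kernel d n A = {u \<in> zvecs n. \<forall>r<d. (\<Sum>j<n. A r j * u j) = 0}"

definition graver_basis :: "nat \<Rightarrow> nat \<Rightarrow> (nat \<Rightarrow> nat \<Rightarrow> int) \<Rightarrow> (nat \<Rightarrow> int) set" where
  "graver_basis d n A =
     {u \<in> int_kernel d n A - {(\<lambda>_. 0)}.
        \<forall>v \<in> int_kernel d n A - {(\<lambda>_. 0)}. conformal_le n v u \<longrightarrow> v = u}"

text \<open>The matrix A_k of size (2k+1) x (4k+2). Columns: block 1 = 0..<k, block 2 = k..<2k,
  block 3 = 2k..<3k, block 4 = 3k..<4k, then columns 4k and 4k+1.
  Rows: 0..<k, k..<2k, and row 2k.\<close>
definition A_mat :: "nat \<Rightarrow> nat \<Rightarrow> nat \<Rightarrow> int" where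
  "A_mat k r j =
    (if r < k then
        (if j = r \<or> j = k + r then 1 else if j = 4*k then -1 else 0)
     else if r < 2*k then
        (if j = 2*k + (r - k) \<or> j = 3*k + (r - k) then 1 else if j = 4*k + 1 then -1 else 0)
     else if r = 2*k then
        (if j = 4*k \<or> j = 4*k + 1 then 1 else 0)
     else 0)"

definition blocks :: "nat \<Rightarrow> (nat \<Rightarrow> int) \<Rightarrow> (nat \<Rightarrow> int) \<Rightarrow> (nat \<Rightarrow> int) \<Rightarrow> (nat \<Rightarrow> int)
                      \<Rightarrow> int \<Rightarrow> int \<Rightarrow> (nat \<Rightarrow> int)" where
  "blocks k x1 x2 x3 x4 a b = (\<lambda>j.
     if j < k then x1 j
     else if j < 2*k then x2 (j - k)
     else if j < 3*k then x3 (j - 2*k)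
     else if j < 4*k then x4 (j - 3*k)
     else if j = 4*k then a
     else if j = 4*k + 1 then b
     else 0)"

definition pm :: "(nat \<Rightarrow> int) set \<Rightarrow> (nat \<Rightarrow> int) set" where
  "pm S = S \<union> (\<lambda>u. - u) ` S"

definition unitv :: "nat \<Rightarrow> nat \<Rightarrow> int" where
  "unitv i = (\<lambda>j. if j = i then 1 else 0)"

definition S1 :: "nat \<Rightarrow> (nat \<Rightarrow> int) set" where
  "S1 k = pm {blocks k (\<lambda>j. - v1 j) (\<lambda>j. -1 + v1 j) v2 (\<lambda>j. 1 - v2 j) (-1) 1 | v1 v2.
              (\<forall>j<k. v1 j \<in> {0,1}) \<and> (\<forall>j<k. v2 j \<in> {0,1})}"

definition S2 :: "nat \<Rightarrow> (nat \<Rightarrow> int) set" where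
  "S2 k = pm {blocks k (unitv i) (\<lambda>j. - unitv i j) (\<lambda>_. 0) (\<lambda>_. 0) 0 0 | i. i < k}"

definition S3 :: "nat \<Rightarrow> (nat \<Rightarrow> int) set" where
  "S3 k = pm {blocks k (\<lambda>_. 0) (\<lambda>_. 0) (unitv i) (\<lambda>j. - unitv i j) 0 0 | i. i < k}"

end

theory Submission
  imports Defs
begin

text \<open>A kernel vector of \<open>A_k\<close> has the form \<open>(x1, x2, x3, x4, a, -a)\<close> with
  \<open>x1 + x2 = a\<one>\<close> and \<open>x3 + x4 = -a\<one>\<close>. If \<open>a < 0\<close> it lies conformally above the
  \<open>0/\<plusminus>1\<close> vector with last coordinates \<open>(-1, 1)\<close> that records, coordinatewise, which of
  \<open>x1 i\<close>, \<open>x2 i\<close> is negative and which of \<open>x3 i\<close>, \<open>x4 i\<close> is positive; if \<open>a = 0\<close>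
  and the vector is nonzero, it lies above some \<open>\<plusminus>(e_i, -e_i, 0, 0, 0, 0)\<close> or
  \<open>\<plusminus>(0, 0, e_i, -e_i, 0, 0)\<close>; if \<open>a > 0\<close>, negate. Conversely these vectors are minimal:
  a nonzero kernel vector below one of them has the same last two coordinates, and a pair of
  equally signed entries lying below a pair with the same sum must coincide with it; for the
  circuits \<open>\<plusminus>(e_i, -e_i, \<dots>)\<close> the support alone leaves no choice.\<close>

subsection \<open>Graver bases in general\<close>

lemma int_kernel_uminus: "u \<in> int_kernel d n A \<Longrightarrow> - u \<in> int_kernel d n A"
  by (simp add: int_kernel_def zvecs_def sum_negf)

lemma conformal_le_uminus: "conformal_le n (- u) v \<longleftrightarrow> conformal_le n u (- v)"
  by (simp add: conformal_le_def)

lemma graver_basis_uminus: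
  assumes "u \<in> graver_basis d n A"
  shows "- u \<in> graver_basis d n A"
  unfolding graver_basis_def
proof (intro CollectI conjI ballI impI)
  have u: "u \<in> int_kernel d n A" "u \<noteq> (\<lambda>_. 0)"
    and min: "\<And>v. v \<in> int_kernel d n A - {\<lambda>_. 0} \<Longrightarrow> conformal_le n v u \<Longrightarrow> v = u"
    using assms by (auto simp: graver_basis_def)
  then show "- u \<in> int_kernel d n A - {\<lambda>_. 0}"
    by (auto simp: fun_eq_iff intro: int_kernel_uminus)
  fix v assume v: "v \<in> int_kernel d n A - {\<lambda>_. 0}" and "conformal_le n v (- u)"
  then have "conformal_le n (- v) u"
    by (simp add: conformal_le_uminus)
  moreover have "- v \<in> int_kernel d n A - {\<lambda>_. 0}"
    using v by (auto simp: fun_eq_iff intro: int_kernel_uminus)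
  ultimately have "- v = u" by (rule min[rotated])
  then show "v = - u" by auto
qed

lemma pm_Un: "pm (S \<union> T) = pm S \<union> pm T"
  by (auto simp: pm_def)

lemma pm_subset_graver_basis:
  "S \<subseteq> graver_basis d n A \<Longrightarrow> pm S \<subseteq> graver_basis d n A"
  by (auto simp: pm_def intro: graver_basis_uminus)

lemma graver_basis_eqI:
  assumes "T \<subseteq> graver_basis d n A"
    and "\<And>u. u \<in> int_kernel d n A \<Longrightarrow> u \<noteq> (\<lambda>_. 0) \<Longrightarrow> \<exists>t\<in>T. conformal_le n t u"
  shows "graver_basis d n A = T"
proof
  show "graver_basis d n A \<subseteq> T"
  proof
    fix u assume u: "u \<in> graver_basis d n A"
    then obtain t where "t \<in> T" "conformal_le n t u"
      using assms(2) by (auto simp: graver_basis_def)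
    moreover from this have "t = u"
      using u assms(1) by (auto simp: graver_basis_def)
    ultimately show "u \<in> T" by simp
  qed
qed (fact assms(1))

definition conformal_le_int :: "int \<Rightarrow> int \<Rightarrow> bool" where
  "conformal_le_int x y \<longleftrightarrow> 0 \<le> x * y \<and> \<bar>x\<bar> \<le> \<bar>y\<bar>"

lemma conformal_le_iff_int: "conformal_le n u v \<longleftrightarrow> (\<forall>i<n. conformal_le_int (u i) (v i))"
  by (simp add: conformal_le_def conformal_le_int_def)

lemma conformal_le_int_zero [simp]: "conformal_le_int x 0 \<longleftrightarrow> x = 0"
  by (simp add: conformal_le_int_def)

lemma conformal_le_int_unit:
  "\<bar>p\<bar> = 1 \<Longrightarrow> conformal_le_int x p \<longleftrightarrow> x = 0 \<or> x = p"
  by (auto simp: conformal_le_int_def abs_if split: if_splits)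

text \<open>Below two entries of equal sign, the absolute values add up, so the sum can only be
  preserved or annihilated in the trivial way.\<close>
lemma conformal_le_int_add_eq:
  assumes "conformal_le_int x p" "conformal_le_int y q" "0 \<le> p * q" "x + y = p + q"
  shows "x = p \<and> y = q"
  using assms unfolding conformal_le_int_def
  by (smt (verit) mult_le_0_iff zero_le_mult_iff)

lemma conformal_le_int_add_zero:
  assumes "conformal_le_int x p" "conformal_le_int y q" "0 \<le> p * q" "x + y = 0"
  shows "x = 0 \<and> y = 0"
  using assms unfolding conformal_le_int_def
  by (smt (verit) mult_le_0_iff zero_le_mult_iff)

lemma block_index_cases:
  fixes j k :: nat
  assumes "j < 4*k+2"
  obtains (x1) i where "i < k" "j = i"
    | (x2) i where "i < k" "j = k+i"
    | (x3) i where "i < k" "j = 2*k+i"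
    | (x4) i where "i < k" "j = 3*k+i"
    | (a) "j = 4*k"
    | (b) "j = 4*k+1"
proof -
  consider "j < k" | "k \<le> j" "j < 2*k" | "2*k \<le> j" "j < 3*k" | "3*k \<le> j" "j < 4*k"
    | "j = 4*k" | "j = 4*k+1"
    using assms by linarith
  then show thesis
  proof cases
    case 2 then show ?thesis using x2[of "j-k"] by simp
  next
    case 3 then show ?thesis using x3[of "j-2*k"] by simp
  next
    case 4 then show ?thesis using x4[of "j-3*k"] by simp
  qed (use x1 a b in auto)
qed

lemma blocks_apply [simp]:
  assumes "i < k"
  shows "blocks k x1 x2 x3 x4 a b i = x1 i"
    and "blocks k x1 x2 x3 x4 a b (k+i) = x2 i"
    and "blocks k x1 x2 x3 x4 a b (2*k+i) = x3 i"
    and "blocks k x1 x2 x3 x4 a b (3*k+i) = x4 i"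
  using assms by (simp_all add: blocks_def)

lemma blocks_apply_last [simp]:
  "blocks k x1 x2 x3 x4 a b (4*k) = a"
  "blocks k x1 x2 x3 x4 a b (Suc (4*k)) = b"
  by (simp_all add: blocks_def)

lemma blocks_in_zvecs: "blocks k x1 x2 x3 x4 a b \<in> zvecs (4*k+2)"
  by (simp add: zvecs_def blocks_def)

lemma zvecs_eq_blocks:
  assumes "u \<in> zvecs (4*k+2)"
  shows "u = blocks k u (\<lambda>i. u (k+i)) (\<lambda>i. u (2*k+i)) (\<lambda>i. u (3*k+i)) (u (4*k)) (u (4*k+1))"
proof
  fix j show "u j = blocks k u (\<lambda>i. u (k+i)) (\<lambda>i. u (2*k+i)) (\<lambda>i. u (3*k+i)) (u (4*k)) (u (4*k+1)) j"
  proof (cases "j < 4*k+2")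
    case True then show ?thesis by (cases rule: block_index_cases) simp_all
  next
    case False then show ?thesis using assms by (simp add: zvecs_def blocks_def)
  qed
qed

lemma blocks_eq_iff:
  "blocks k x1 x2 x3 x4 a b = blocks k y1 y2 y3 y4 c d \<longleftrightarrow>
     (\<forall>i<k. x1 i = y1 i \<and> x2 i = y2 i \<and> x3 i = y3 i \<and> x4 i = y4 i) \<and> a = c \<and> b = d"
    (is "?l = ?r \<longleftrightarrow> _")
proof
  assume "?l = ?r" then show "(\<forall>i<k. x1 i = y1 i \<and> x2 i = y2 i \<and> x3 i = y3 i \<and> x4 i = y4 i) \<and> a = c \<and> b = d"
    by (metis blocks_apply blocks_apply_last)
next
  assume eq: "(\<forall>i<k. x1 i = y1 i \<and> x2 i = y2 i \<and> x3 i = y3 i \<and> x4 i = y4 i) \<and> a = c \<and> b = d"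
  show "?l = ?r"
  proof
    fix j show "?l j = ?r j"
    proof (cases "j < 4*k+2")
      case True then show ?thesis by (cases rule: block_index_cases) (simp_all add: eq)
    qed (simp add: blocks_def)
  qed
qed

lemma zero_eq_blocks: "(\<lambda>_. 0) = blocks k (\<lambda>_. 0) (\<lambda>_. 0) (\<lambda>_. 0) (\<lambda>_. 0) 0 0"
  by (simp add: blocks_def fun_eq_iff)

lemma uminus_blocks:
  "- blocks k x1 x2 x3 x4 a b = blocks k (- x1) (- x2) (- x3) (- x4) (- a) (- b)"
  by (simp add: blocks_def fun_eq_iff)

lemma conformal_le_blocks_iff:
  "conformal_le (4*k+2) (blocks k x1 x2 x3 x4 a b) (blocks k y1 y2 y3 y4 c d) \<longleftrightarrow>
     (\<forall>i<k. conformal_le_int (x1 i) (y1 i) \<and> conformal_le_int (x2 i) (y2 i)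
        \<and> conformal_le_int (x3 i) (y3 i) \<and> conformal_le_int (x4 i) (y4 i))
     \<and> conformal_le_int a c \<and> conformal_le_int b d"
  (is "?conf \<longleftrightarrow> ?blockwise")
proof
  assume ?conf
  then have H: "conformal_le_int (blocks k x1 x2 x3 x4 a b j) (blocks k y1 y2 y3 y4 c d j)"
    if "j < 4*k+2" for j
    using that by (simp add: conformal_le_iff_int)
  have "conformal_le_int (x1 i) (y1 i) \<and> conformal_le_int (x2 i) (y2 i)
      \<and> conformal_le_int (x3 i) (y3 i) \<and> conformal_le_int (x4 i) (y4 i)" if "i < k" for i
    using that H[of i] H[of "k+i"] H[of "2*k+i"] H[of "3*k+i"] by simp
  then show ?blockwise
    using H[of "4*k"] H[of "4*k+1"] by simp
next
  assume blockwise: ?blockwise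
  show ?conf
    unfolding conformal_le_iff_int
  proof (intro allI impI)
    fix j assume "j < 4*k+2"
    then show "conformal_le_int (blocks k x1 x2 x3 x4 a b j) (blocks k y1 y2 y3 y4 c d j)"
      by (cases rule: block_index_cases) (simp_all add: blockwise)
  qed
qed

subsection \<open>The kernel of \<open>A_k\<close>\<close>

lemma sum_deltas:
  fixes u :: "nat \<Rightarrow> int"
  assumes "p < n" "q < n" "s < n"
  shows "(\<Sum>j<n. (if j = p then u j else 0) + (if j = q then u j else 0) - (if j = s then u j else 0))
    = u p + u q - u s"
  using assms by (simp add: sum.distrib sum_subtractf)

lemma A_mat_row_sums:
  assumes "i < k"
  shows "(\<Sum>j<4*k+2. A_mat k i j * u j) = u i + u (k+i) - u (4*k)"
    and "(\<Sum>j<4*k+2. A_mat k (k+i) j * u j) = u (2*k+i) + u (3*k+i) - u (4*k+1)"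
proof -
  have "(\<Sum>j<4*k+2. A_mat k i j * u j) = (\<Sum>j<4*k+2. (if j = i then u j else 0)
      + (if j = k+i then u j else 0) - (if j = 4*k then u j else 0))"
    using assms by (intro sum.cong) (auto simp: A_mat_def)
  also have "\<dots> = u i + u (k+i) - u (4*k)"
    using assms by (intro sum_deltas) auto
  finally show "(\<Sum>j<4*k+2. A_mat k i j * u j) = u i + u (k+i) - u (4*k)" .
  have "(\<Sum>j<4*k+2. A_mat k (k+i) j * u j) = (\<Sum>j<4*k+2. (if j = 2*k+i then u j else 0)
      + (if j = 3*k+i then u j else 0) - (if j = 4*k+1 then u j else 0))"
    using assms by (intro sum.cong) (auto simp: A_mat_def)
  also have "\<dots> = u (2*k+i) + u (3*k+i) - u (4*k+1)"
    using assms by (intro sum_deltas) auto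
  finally show "(\<Sum>j<4*k+2. A_mat k (k+i) j * u j) = u (2*k+i) + u (3*k+i) - u (4*k+1)" .
qed

lemma A_mat_last_row_sum: "(\<Sum>j<4*k+2. A_mat k (2*k) j * u j) = u (4*k) + u (4*k+1)"
proof -
  have "(\<Sum>j<4*k+2. A_mat k (2*k) j * u j) = (\<Sum>j<4*k+2. (if j = 4*k then u j else 0)
      + (if j = 4*k+1 then u j else 0) - (if j = 4*k+1 then 0 else 0))"
    by (intro sum.cong) (auto simp: A_mat_def)
  then show ?thesis by (simp add: sum.distrib)
qed

lemma all_less_2k1_iff: "(\<forall>r<2*k+1. P r) \<longleftrightarrow> (\<forall>i<k. P i \<and> P (k+i)) \<and> P (2*k)"
  for k :: nat
proof
  assume "\<forall>r<2*k+1. P r"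
  then show "(\<forall>i<k. P i \<and> P (k+i)) \<and> P (2*k)" by simp
next
  assume P: "(\<forall>i<k. P i \<and> P (k+i)) \<and> P (2*k)"
  show "\<forall>r<2*k+1. P r"
  proof (intro allI impI)
    fix r assume "r < 2*k+1"
    then consider "r < k" | "r = k + (r-k)" "r - k < k" | "r = 2*k" by linarith
    then show "P r" using P by cases metis+
  qed
qed

lemma blocks_in_int_kernel_iff:
  "blocks k x1 x2 x3 x4 a b \<in> int_kernel (2*k+1) (4*k+2) (A_mat k) \<longleftrightarrow>
     (\<forall>i<k. x1 i + x2 i = a \<and> x3 i + x4 i = b) \<and> a + b = 0"
  unfolding int_kernel_def mem_Collect_eq all_less_2k1_iff
  by (simp add: blocks_in_zvecs A_mat_row_sums A_mat_last_row_sum del: add_2_eq_Suc')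

lemma int_kernel_blocksE:
  assumes "u \<in> int_kernel (2*k+1) (4*k+2) (A_mat k)"
  obtains x1 x2 x3 x4 a where "u = blocks k x1 x2 x3 x4 a (- a)"
    and "\<forall>i<k. x1 i + x2 i = a" and "\<forall>i<k. x3 i + x4 i = - a"
proof -
  have "u \<in> zvecs (4*k+2)" using assms by (simp add: int_kernel_def)
  then have u: "u = blocks k u (\<lambda>i. u (k+i)) (\<lambda>i. u (2*k+i)) (\<lambda>i. u (3*k+i)) (u (4*k)) (u (4*k+1))"
    by (rule zvecs_eq_blocks)
  with assms have sums: "\<forall>i<k. u i + u (k+i) = u (4*k) \<and> u (2*k+i) + u (3*k+i) = u (4*k+1)"
    and "u (4*k) + u (4*k+1) = 0"
    by (metis blocks_in_int_kernel_iff)+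
  then have "u (4*k+1) = - u (4*k)" by simp
  with u sums show thesis by (intro that) auto
qed

subsection \<open>The minimal vectors\<close>

definition binary :: "nat \<Rightarrow> (nat \<Rightarrow> int) \<Rightarrow> bool" where
  "binary k v \<longleftrightarrow> (\<forall>j<k. v j \<in> {0, 1})"

definition cube_vec :: "nat \<Rightarrow> (nat \<Rightarrow> int) \<Rightarrow> (nat \<Rightarrow> int) \<Rightarrow> nat \<Rightarrow> int" where
  "cube_vec k v1 v2 = blocks k (\<lambda>j. - v1 j) (\<lambda>j. v1 j - 1) v2 (\<lambda>j. 1 - v2 j) (-1) 1"

definition circuit12 :: "nat \<Rightarrow> nat \<Rightarrow> nat \<Rightarrow> int" where
  "circuit12 k i = blocks k (unitv i) (\<lambda>j. - unitv i j) (\<lambda>_. 0) (\<lambda>_. 0) 0 0"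

definition circuit34 :: "nat \<Rightarrow> nat \<Rightarrow> nat \<Rightarrow> int" where
  "circuit34 k i = blocks k (\<lambda>_. 0) (\<lambda>_. 0) (unitv i) (\<lambda>j. - unitv i j) 0 0"

lemma S1_eq: "S1 k = pm {cube_vec k v1 v2 | v1 v2. binary k v1 \<and> binary k v2}"
  by (simp add: S1_def cube_vec_def binary_def)

lemma S2_eq: "S2 k = pm (circuit12 k ` {..<k})"
  unfolding S2_def circuit12_def by (rule arg_cong[where f = pm]) auto

lemma S3_eq: "S3 k = pm (circuit34 k ` {..<k})"
  unfolding S3_def circuit34_def by (rule arg_cong[where f = pm]) auto

lemma graver_basis_memI:
  assumes "w \<in> int_kernel d n A" "w \<noteq> (\<lambda>_. 0)"
    and "\<And>v. v \<in> int_kernel d n A \<Longrightarrow> v \<noteq> (\<lambda>_. 0) \<Longrightarrow> conformal_le n v w \<Longrightarrow> v = w"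
  shows "w \<in> graver_basis d n A"
  using assms by (simp add: graver_basis_def)

lemma cube_vec_in_graver_basis:
  assumes v1: "binary k v1" and v2: "binary k v2"
  shows "cube_vec k v1 v2 \<in> graver_basis (2*k+1) (4*k+2) (A_mat k)"
proof (rule graver_basis_memI)
  show "cube_vec k v1 v2 \<in> int_kernel (2*k+1) (4*k+2) (A_mat k)"
    unfolding cube_vec_def blocks_in_int_kernel_iff by simp
  show "cube_vec k v1 v2 \<noteq> (\<lambda>_. 0)"
    by (metis blocks_apply_last(1) cube_vec_def zero_neq_neg_one)
  fix v assume vK: "v \<in> int_kernel (2*k+1) (4*k+2) (A_mat k)" and nz: "v \<noteq> (\<lambda>_. 0)"
    and conf: "conformal_le (4*k+2) v (cube_vec k v1 v2)"
  from vK obtain x1 x2 x3 x4 a where v: "v = blocks k x1 x2 x3 x4 a (- a)"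
    and sums: "\<forall>i<k. x1 i + x2 i = a" "\<forall>i<k. x3 i + x4 i = - a"
    by (rule int_kernel_blocksE)
  have C: "\<forall>i<k. conformal_le_int (x1 i) (- v1 i) \<and> conformal_le_int (x2 i) (v1 i - 1)
      \<and> conformal_le_int (x3 i) (v2 i) \<and> conformal_le_int (x4 i) (1 - v2 i)"
    and "conformal_le_int a (-1)"
    using conf unfolding v cube_vec_def conformal_le_blocks_iff by simp_all
  then have "a = 0 \<or> a = -1" by (simp add: conformal_le_int_unit)
  text \<open>Both pairs of coordinates of \<open>cube_vec\<close> have equal signs, so \<open>a\<close> determines them.\<close>
  have same_sign: "0 \<le> (- v1 i) * (v1 i - 1)" "0 \<le> v2 i * (1 - v2 i)" if "i < k" for i
    using that v1 v2 by (auto simp: binary_def)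
  show "v = cube_vec k v1 v2"
  proof (cases "a = 0")
    case True
    have "x1 i = 0 \<and> x2 i = 0 \<and> x3 i = 0 \<and> x4 i = 0" if "i < k" for i
      using conformal_le_int_add_zero[of "x1 i" "- v1 i" "x2 i" "v1 i - 1"]
        conformal_le_int_add_zero[of "x3 i" "v2 i" "x4 i" "1 - v2 i"]
        C same_sign[OF that] sums that True by auto
    then have "v = (\<lambda>_. 0)"
      unfolding v True by (subst zero_eq_blocks[of k]) (simp add: blocks_eq_iff)
    with nz show ?thesis ..
  next
    case False
    with \<open>a = 0 \<or> a = -1\<close> have "a = -1" by simp
    have "x1 i = - v1 i \<and> x2 i = v1 i - 1 \<and> x3 i = v2 i \<and> x4 i = 1 - v2 i" if "i < k" for i
      using conformal_le_int_add_eq[of "x1 i" "- v1 i" "x2 i" "v1 i - 1"]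
        conformal_le_int_add_eq[of "x3 i" "v2 i" "x4 i" "1 - v2 i"]
        C same_sign[OF that] sums that \<open>a = -1\<close> by auto
    then show ?thesis
      unfolding v cube_vec_def \<open>a = -1\<close> by (simp add: blocks_eq_iff)
  qed
qed

lemma conformal_le_int_unit_pair:
  assumes sums: "\<forall>i<k. y i + z i = 0"
    and conf: "\<forall>i<k. conformal_le_int (y i) (unitv i0 i) \<and> conformal_le_int (z i) (- unitv i0 i)"
  shows "(\<forall>i<k. y i = 0 \<and> z i = 0) \<or> (\<forall>i<k. y i = unitv i0 i \<and> z i = - unitv i0 i)"
proof -
  have y: "y i = 0 \<or> y i = unitv i0 i" if "i < k" for i
    using conf that by (cases "i = i0") (auto simp: unitv_def conformal_le_int_unit)
  show ?thesis
  proof (cases "i0 < k \<and> y i0 = 1")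
    case True
    then have "y i = unitv i0 i" if "i < k" for i
      using y[OF that] by (auto simp: unitv_def)
    then show ?thesis using sums by auto
  next
    case False
    then have "y i = 0" if "i < k" for i
      using y[OF that] that by (auto simp: unitv_def split: if_splits)
    then show ?thesis using sums by auto
  qed
qed

lemma circuit12_in_graver_basis:
  assumes "i0 < k"
  shows "circuit12 k i0 \<in> graver_basis (2*k+1) (4*k+2) (A_mat k)"
proof (rule graver_basis_memI)
  show "circuit12 k i0 \<in> int_kernel (2*k+1) (4*k+2) (A_mat k)"
    unfolding circuit12_def blocks_in_int_kernel_iff by simp
  show "circuit12 k i0 \<noteq> (\<lambda>_. 0)"
    using assms by (metis blocks_apply(1) circuit12_def unitv_def one_neq_zero)
  fix v assume vK: "v \<in> int_kernel (2*k+1) (4*k+2) (A_mat k)" and nz: "v \<noteq> (\<lambda>_. 0)"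
    and conf: "conformal_le (4*k+2) v (circuit12 k i0)"
  from vK obtain x1 x2 x3 x4 a where v: "v = blocks k x1 x2 x3 x4 a (- a)"
    and sums: "\<forall>i<k. x1 i + x2 i = a" "\<forall>i<k. x3 i + x4 i = - a"
    by (rule int_kernel_blocksE)
  have C: "\<forall>i<k. conformal_le_int (x1 i) (unitv i0 i) \<and> conformal_le_int (x2 i) (- unitv i0 i)"
    and zero: "\<forall>i<k. x3 i = 0 \<and> x4 i = 0" "a = 0"
    using conf unfolding v circuit12_def conformal_le_blocks_iff by simp_all
  from conformal_le_int_unit_pair[OF _ C] sums zero
  consider "\<forall>i<k. x1 i = 0 \<and> x2 i = 0" | "\<forall>i<k. x1 i = unitv i0 i \<and> x2 i = - unitv i0 i"
    by auto
  then show "v = circuit12 k i0"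
  proof cases
    case 1
    then have "v = (\<lambda>_. 0)"
      unfolding v using zero by (subst zero_eq_blocks[of k]) (simp add: blocks_eq_iff)
    with nz show ?thesis ..
  next
    case 2
    then show ?thesis
      unfolding v circuit12_def using zero by (simp add: blocks_eq_iff)
  qed
qed

lemma circuit34_in_graver_basis:
  assumes "i0 < k"
  shows "circuit34 k i0 \<in> graver_basis (2*k+1) (4*k+2) (A_mat k)"
proof (rule graver_basis_memI)
  show "circuit34 k i0 \<in> int_kernel (2*k+1) (4*k+2) (A_mat k)"
    unfolding circuit34_def blocks_in_int_kernel_iff by simp
  show "circuit34 k i0 \<noteq> (\<lambda>_. 0)"
    using assms by (metis blocks_apply(3) circuit34_def unitv_def one_neq_zero)
  fix v assume vK: "v \<in> int_kernel (2*k+1) (4*k+2) (A_mat k)" and nz: "v \<noteq> (\<lambda>_. 0)"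
    and conf: "conformal_le (4*k+2) v (circuit34 k i0)"
  from vK obtain x1 x2 x3 x4 a where v: "v = blocks k x1 x2 x3 x4 a (- a)"
    and sums: "\<forall>i<k. x1 i + x2 i = a" "\<forall>i<k. x3 i + x4 i = - a"
    by (rule int_kernel_blocksE)
  have C: "\<forall>i<k. conformal_le_int (x3 i) (unitv i0 i) \<and> conformal_le_int (x4 i) (- unitv i0 i)"
    and zero: "\<forall>i<k. x1 i = 0 \<and> x2 i = 0" "a = 0"
    using conf unfolding v circuit34_def conformal_le_blocks_iff by simp_all
  from conformal_le_int_unit_pair[OF _ C] sums zero
  consider "\<forall>i<k. x3 i = 0 \<and> x4 i = 0" | "\<forall>i<k. x3 i = unitv i0 i \<and> x4 i = - unitv i0 i"
    by auto
  then show "v = circuit34 k i0"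
  proof cases
    case 1
    then have "v = (\<lambda>_. 0)"
      unfolding v using zero by (subst zero_eq_blocks[of k]) (simp add: blocks_eq_iff)
    with nz show ?thesis ..
  next
    case 2
    then show ?thesis
      unfolding v circuit34_def using zero by (simp add: blocks_eq_iff)
  qed
qed

subsection \<open>Covering the kernel\<close>

lemma cube_vec_conformal_le:
  assumes "\<forall>i<k. x1 i + x2 i = a" "\<forall>i<k. x3 i + x4 i = - a" "a < 0"
  shows "conformal_le (4*k+2)
    (cube_vec k (\<lambda>i. if x1 i < 0 then 1 else 0) (\<lambda>i. if 0 < x3 i then 1 else 0))
    (blocks k x1 x2 x3 x4 a (- a))"
  unfolding cube_vec_def conformal_le_blocks_iff
  using assms by (auto simp: conformal_le_int_def)

lemma circuit12_conformal_le:
  assumes "\<forall>i<k. x1 i + x2 i = 0" "i0 < k" "0 < x1 i0"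
  shows "conformal_le (4*k+2) (circuit12 k i0) (blocks k x1 x2 x3 x4 0 0)"
  unfolding circuit12_def conformal_le_blocks_iff
  using assms by (auto simp: conformal_le_int_def unitv_def)

lemma circuit34_conformal_le:
  assumes "\<forall>i<k. x3 i + x4 i = 0" "i0 < k" "0 < x3 i0"
  shows "conformal_le (4*k+2) (circuit34 k i0) (blocks k x1 x2 x3 x4 0 0)"
  unfolding circuit34_def conformal_le_blocks_iff
  using assms by (auto simp: conformal_le_int_def unitv_def)

definition graver_reps :: "nat \<Rightarrow> (nat \<Rightarrow> int) set" where
  "graver_reps k = {cube_vec k v1 v2 | v1 v2. binary k v1 \<and> binary k v2}
     \<union> circuit12 k ` {..<k} \<union> circuit34 k ` {..<k}"

lemma pm_graver_reps: "pm (graver_reps k) = S1 k \<union> S2 k \<union> S3 k"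
  by (simp add: graver_reps_def S1_eq S2_eq S3_eq pm_Un)

lemma graver_reps_subset_graver_basis:
  "graver_reps k \<subseteq> graver_basis (2*k+1) (4*k+2) (A_mat k)"
  unfolding graver_reps_def
  using cube_vec_in_graver_basis circuit12_in_graver_basis circuit34_in_graver_basis by blast

lemma graver_reps_conformal_le_blocks:
  assumes sums: "\<forall>i<k. x1 i + x2 i = a" "\<forall>i<k. x3 i + x4 i = - a"
    and pos: "a < 0 \<or> a = 0 \<and> (\<exists>i<k. 0 < x1 i \<or> 0 < x3 i)"
  shows "\<exists>t\<in>graver_reps k. conformal_le (4*k+2) t (blocks k x1 x2 x3 x4 a (- a))"
proof (cases "a < 0")
  case True
  then show ?thesis
    using cube_vec_conformal_le[OF sums] unfolding graver_reps_def binary_def by fastforce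
next
  case False
  with pos obtain i where "a = 0" "i < k" "0 < x1 i \<or> 0 < x3 i" by blast
  moreover have "circuit12 k i \<in> graver_reps k" "circuit34 k i \<in> graver_reps k"
    using \<open>i < k\<close> by (simp_all add: graver_reps_def)
  moreover have "\<forall>i<k. x1 i + x2 i = 0" "\<forall>i<k. x3 i + x4 i = 0"
    using sums \<open>a = 0\<close> by simp_all
  ultimately have "\<exists>t\<in>graver_reps k. conformal_le (4*k+2) t (blocks k x1 x2 x3 x4 0 0)"
    using circuit12_conformal_le[of k x1 x2 i] circuit34_conformal_le[of k x3 x4 i] by blast
  with \<open>a = 0\<close> show ?thesis by simp
qed

lemma int_kernel_covered:
  assumes "u \<in> int_kernel (2*k+1) (4*k+2) (A_mat k)" "u \<noteq> (\<lambda>_. 0)"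
  shows "\<exists>t\<in>graver_reps k. conformal_le (4*k+2) t u \<or> conformal_le (4*k+2) t (- u)"
proof -
  obtain x1 x2 x3 x4 a where u: "u = blocks k x1 x2 x3 x4 a (- a)"
    and sums: "\<forall>i<k. x1 i + x2 i = a" "\<forall>i<k. x3 i + x4 i = - a"
    using assms(1) by (rule int_kernel_blocksE)
  have neg_u: "- u = blocks k (- x1) (- x2) (- x3) (- x4) (- a) (- (- a))"
    by (simp add: u uminus_blocks)
  have neg_sums: "\<forall>i<k. (- x1) i + (- x2) i = - a" "\<forall>i<k. (- x3) i + (- x4) i = - (- a)"
    using sums by (auto simp: algebra_simps)
  have "a \<noteq> 0 \<or> (\<exists>i<k. x1 i \<noteq> 0 \<or> x3 i \<noteq> 0)"
  proof (rule ccontr)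
    assume "\<not> ?thesis"
    then have "u = (\<lambda>_. 0)"
      using sums unfolding u by (subst zero_eq_blocks[of k]) (auto simp: blocks_eq_iff)
    with assms(2) show False ..
  qed
  then have "a < 0 \<or> a = 0 \<and> (\<exists>i<k. 0 < x1 i \<or> 0 < x3 i)
      \<or> - a < 0 \<or> - a = 0 \<and> (\<exists>i<k. 0 < (- x1) i \<or> 0 < (- x3) i)"
    by (cases "a = 0") (auto simp: linorder_neq_iff)
  then show ?thesis
    using graver_reps_conformal_le_blocks[OF sums] graver_reps_conformal_le_blocks[OF neg_sums]
    unfolding u[symmetric] neg_u[symmetric] by blast
qed

lemma S1_S2_disjoint: "S1 k \<inter> S2 k = {}"
  by (auto simp: S1_def S2_def pm_def dest!: fun_cong[where x = "4*k"])

lemma S1_S3_disjoint: "S1 k \<inter> S3 k = {}"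
  by (auto simp: S1_def S3_def pm_def dest!: fun_cong[where x = "4*k"])

lemma S2_S3_disjoint: "S2 k \<inter> S3 k = {}"
  by (auto simp: S2_eq S3_eq circuit12_def circuit34_def pm_def uminus_blocks blocks_eq_iff
      unitv_def) (metis one_neq_zero)+

theorem theorem2:
  fixes k :: nat
  assumes "k \<ge> 1"
  shows "graver_basis (2*k+1) (4*k+2) (A_mat k) = S1 k \<union> S2 k \<union> S3 k
       \<and> S1 k \<inter> S2 k = {} \<and> S1 k \<inter> S3 k = {} \<and> S2 k \<inter> S3 k = {}"
proof -
  have "graver_basis (2*k+1) (4*k+2) (A_mat k) = pm (graver_reps k)"
  proof (rule graver_basis_eqI)
    show "pm (graver_reps k) \<subseteq> graver_basis (2*k+1) (4*k+2) (A_mat k)"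
      by (intro pm_subset_graver_basis graver_reps_subset_graver_basis)
    fix u assume "u \<in> int_kernel (2*k+1) (4*k+2) (A_mat k)" "u \<noteq> (\<lambda>_. 0)"
    then obtain t where "t \<in> graver_reps k"
      and "conformal_le (4*k+2) t u \<or> conformal_le (4*k+2) (- t) u"
      using int_kernel_covered conformal_le_uminus by blast
    then show "\<exists>t\<in>pm (graver_reps k). conformal_le (4*k+2) t u"
      unfolding pm_def by blast
  qed
  then show ?thesis
    by (simp add: pm_graver_reps S1_S2_disjoint S1_S3_disjoint S2_S3_disjoint)
qed

end
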